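(* Let $P\subset\mathbb R^d$ be a $d$-polytope, $S$ a simplex facet of $P$, and $\mathcal F,\mathcal N\subseteq\operatorname{adj}(S)$ disjoint with $V_S(\mathcal F,\mathcal N;P)\neq\emptyset$. Then for any two points $v,w\in V_S(\mathcal F,\mathcal N;P)$ the polytopes $\operatorname{conv}(P\cup\{v\})$ and $\operatorname{conv}(P\cup\{w\})$ are combinatorially equivalent.
   Context: For a facet $F$ of $P$ let $H_F=\{x:\langle x,a_F\rangle=\ell_F\}$ be its affine hull, oriented so that $P\subseteq\{x:\langle x,a_F\rangle\geq\ell_F\}$; put $H_F^+=\{x:\langle x,a_F\rangle>\ell_F\}$, $H_F^-=\{x:\langle x,a_F\rangle<\ell_F\}$. $\operatorname{adj}(S)$ is the set of facets sharing a ridge with $S$. A simplex facet is a facet combinatorially equivalent to a $(d-1)$-simplex. $V_S(\mathcal F,\mathcal N;P)$ is the set of points lying in $H_F^-$ for $F\in\mathcal N\cup\{S\}$, in $H_F$ for $F\in\mathcal F$, and in $H_F^+$ for all other facets $F$ of $P$. *)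

theory Defs
  imports "HOL-Analysis.Analysis"
begin

definition comb_equiv :: "'a::euclidean_space set \<Rightarrow> 'a set \<Rightarrow> bool" where
  "comb_equiv P Q \<longleftrightarrow> (\<exists>f. bij_betw f {F. F face_of P} {G. G face_of Q} \<and>
      (\<forall>F1 F2. F1 face_of P \<longrightarrow> F2 face_of P \<longrightarrow> (F1 \<subseteq> F2 \<longleftrightarrow> f F1 \<subseteq> f F2)))"

definition full_polytope :: "'a::euclidean_space set \<Rightarrow> bool" where
  "full_polytope P \<longleftrightarrow> polytope P \<and> aff_dim P = int DIM('a)"

definition ridge_of :: "'a::euclidean_space set \<Rightarrow> 'a set \<Rightarrow> bool" (infixr \<open>ridge'_of\<close> 50) where
  "R ridge_of P \<longleftrightarrow> R face_of P \<and> R \<noteq> {} \<and> aff_dim R = aff_dim P - 2"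

definition adj :: "'a::euclidean_space set \<Rightarrow> 'a set \<Rightarrow> 'a set set" where
  "adj P S = {F. F facet_of P \<and> F \<noteq> S \<and> (\<exists>R. R ridge_of P \<and> R \<subseteq> F \<and> R \<subseteq> S)}"

definition simplex_facet :: "'a::euclidean_space set \<Rightarrow> 'a set \<Rightarrow> bool" where
  "simplex_facet P S \<longleftrightarrow> S facet_of P \<and>
     (\<exists>T. (int DIM('a) - 1) simplex T \<and> comb_equiv S T)"

text \<open>Oriented supporting hyperplane data of a facet F: a \<noteq> 0, aff F = {a.x = l},
  P \<subseteq> {a.x \<ge> l}.  (Unique up to positive scaling, so the open half-spaces below are
  well defined.)\<close>
definition facet_normal :: "'a::euclidean_space set \<Rightarrow> 'a set \<Rightarrow> 'a \<Rightarrow> real \<Rightarrow> bool" where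
  "facet_normal P F a l \<longleftrightarrow> a \<noteq> 0 \<and> affine hull F = {x. inner x a = l} \<and>
     P \<subseteq> {x. inner x a \<ge> l}"

definition Hplus :: "'a::euclidean_space set \<Rightarrow> 'a set \<Rightarrow> 'a set" where
  "Hplus P F = {x. \<exists>a l. facet_normal P F a l \<and> inner x a > l}"

definition Hminus :: "'a::euclidean_space set \<Rightarrow> 'a set \<Rightarrow> 'a set" where
  "Hminus P F = {x. \<exists>a l. facet_normal P F a l \<and> inner x a < l}"

definition VS :: "'a::euclidean_space set \<Rightarrow> 'a set \<Rightarrow> 'a set set \<Rightarrow> 'a set set \<Rightarrow> 'a set" where
  "VS P S FF NN = {x. (\<forall>F. F facet_of P \<longrightarrow>
       (if F \<in> NN \<union> {S} then x \<in> Hminus P F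
        else if F \<in> FF then x \<in> affine hull F
        else x \<in> Hplus P F))}"

end

theory Submission
  imports Defs
begin

text \<open>
  Let P be full-dimensional and v a point outside P. Call v beneath a facet K if it lies strictly
  on the side of P of the hyperplane of K, and beyond K if it lies strictly on the other side.
  The faces of conv(P \<union> {v}) are the nonempty faces F of P lying in some facet that v is beneath,
  together with the pyramids conv(F \<union> {v}) over those faces F of P (the empty face included) for
  which v lies on the hyperplanes of all facets through F, or is beneath one and beyond another of
  them. Both descriptions depend only on the signs of the facet slacks of v, so if v and w have
  the same sign vector then the map fixing the faces of the first kind and sending
  conv(F \<union> {v}) to conv(F \<union> {w}) is an isomorphism of face lattices. All points of
  V_S(F, N; P) have the same sign vector and lie beyond S, hence outside P; of the hypotheses on S
  only that it is a facet is needed.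
\<close>

lemma finite_uniform_perturbation:
  fixes \<alpha> \<beta> :: "'b \<Rightarrow> real"
  assumes "finite I" and "\<And>K. K \<in> I \<Longrightarrow> \<alpha> K > 0"
  shows "\<exists>t>0. \<forall>K\<in>I. \<forall>\<tau>. \<bar>\<tau>\<bar> \<le> t \<longrightarrow> (1 + \<tau>) * \<alpha> K - \<tau> * \<beta> K > 0"
proof -
  have "\<forall>K\<in>I. \<forall>\<^sub>F \<tau> in nhds 0. (1 + \<tau>) * \<alpha> K - \<tau> * \<beta> K > 0"
  proof
    fix K assume "K \<in> I"
    have "((\<lambda>\<tau>::real. (1 + \<tau>) * \<alpha> K - \<tau> * \<beta> K) \<longlongrightarrow> \<alpha> K) (nhds 0)"
    proof -
      have "((\<lambda>\<tau>::real. (1 + \<tau>) * \<alpha> K - \<tau> * \<beta> K) \<longlongrightarrow> (1 + 0) * \<alpha> K - 0 * \<beta> K) (nhds 0)"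
        by (intro tendsto_diff tendsto_mult tendsto_add tendsto_const filterlim_ident)
      then show ?thesis by simp
    qed
    then show "\<forall>\<^sub>F \<tau> in nhds 0. (1 + \<tau>) * \<alpha> K - \<tau> * \<beta> K > 0"
      using assms(2)[OF \<open>K \<in> I\<close>] by (rule order_tendstoD(1))
  qed
  then have "\<forall>\<^sub>F \<tau> in nhds 0. \<forall>K\<in>I. (1 + \<tau>) * \<alpha> K - \<tau> * \<beta> K > 0"
    by (rule eventually_ball_finite[OF assms(1)])
  then obtain d where "d > 0" and "\<forall>\<tau>. dist \<tau> 0 \<le> d \<longrightarrow> (\<forall>K\<in>I. (1 + \<tau>) * \<alpha> K - \<tau> * \<beta> K > 0)"
    unfolding eventually_nhds_metric_le by auto
  then show ?thesis by (intro exI[of _ d]) (simp add: dist_real_def)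
qed

lemma exists_pos_weights_sum_eq:
  fixes g :: "'b \<Rightarrow> real"
  assumes "finite J" and "k \<in> J" and "g k \<noteq> 0" and "(s - (\<Sum>K\<in>J. g K)) / g k \<ge> 0"
  shows "\<exists>lam. (\<forall>K\<in>J. lam K > 0) \<and> (\<Sum>K\<in>J. lam K * g K) = s"
proof -
  define c where "c = (s - (\<Sum>K\<in>J. g K)) / g k"
  define lam where "lam K = (if K = k then 1 + c else 1)" for K
  have "(\<Sum>K\<in>J. lam K * g K) = (\<Sum>K\<in>J. g K + (if K = k then c * g k else 0))"
    by (intro sum.cong) (auto simp: lam_def distrib_right)
  also have "\<dots> = s"
    using assms by (simp add: sum.distrib c_def)
  finally show ?thesis
    using assms(4) by (intro exI[of _ lam]) (auto simp: lam_def c_def)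
qed

lemma exists_pos_weights_sum_pos:
  fixes g :: "'b \<Rightarrow> real"
  assumes "finite J" and "k \<in> J" and "g k > 0"
  shows "\<exists>lam. (\<forall>K\<in>J. lam K > 0) \<and> (\<Sum>K\<in>J. lam K * g K) > 0"
proof -
  define T where "T = (\<Sum>K\<in>J. g K)"
  have "(\<bar>T\<bar> + 1 - T) / g k \<ge> 0"
    using assms(3) by (intro divide_nonneg_pos) auto
  then show ?thesis
    using exists_pos_weights_sum_eq[OF assms(1,2), of g "\<bar>T\<bar> + 1"] assms(3)
    by (force simp: T_def)
qed

lemma exists_pos_weights_sum_zero:
  fixes g :: "'b \<Rightarrow> real"
  assumes "finite J" and "p \<in> J" and "g p > 0" and "n \<in> J" and "g n < 0"
  shows "\<exists>lam. (\<forall>K\<in>J. lam K > 0) \<and> (\<Sum>K\<in>J. lam K * g K) = 0"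
proof (cases "(\<Sum>K\<in>J. g K) \<ge> 0")
  case True
  then have "(0 - (\<Sum>K\<in>J. g K)) / g n \<ge> 0"
    using assms(5) by (intro divide_nonpos_neg) auto
  then show ?thesis using exists_pos_weights_sum_eq[OF assms(1,4)] assms(5) by force
next
  case False
  then have "(0 - (\<Sum>K\<in>J. g K)) / g p \<ge> 0"
    using assms(3) by (intro divide_nonneg_pos) auto
  then show ?thesis using exists_pos_weights_sum_eq[OF assms(1,2)] assms(3) by force
qed

lemma facet_normal_unique_up_to_scale:
  assumes K: "K facet_of P" and n: "facet_normal P K a l" and n': "facet_normal P K a' l'"
  obtains \<kappa> where "\<kappa> > 0" and "\<And>x. inner x a' - l' = \<kappa> * (inner x a - l)"
proof -
  have a: "a \<noteq> 0" and ah: "affine hull K = {x. inner x a = l}" and Pa: "P \<subseteq> {x. inner x a \<ge> l}"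
    using n by (auto simp: facet_normal_def)
  have ah': "affine hull K = {x. inner x a' = l'}" and Pa': "P \<subseteq> {x. inner x a' \<ge> l'}"
    using n' by (auto simp: facet_normal_def)
  define \<kappa> where "\<kappa> = inner a a' / inner a a"
  have eq: "inner x a' - l' = \<kappa> * (inner x a - l)" for x
  proof -
    define x' where "x' = x - ((inner x a - l) / inner a a) *\<^sub>R a"
    have "inner x' a = l" using a by (simp add: x'_def inner_simps inner_commute)
    then have "inner x' a' = l'" using ah ah' by blast
    then show ?thesis
      using a unfolding x'_def \<kappa>_def by (simp add: inner_simps inner_commute) (simp add: field_simps)
  qed
  have "\<exists>p\<in>P. inner p a > l"
  proof (rule ccontr)
    assume "\<not> (\<exists>p\<in>P. inner p a > l)"
    then have "P \<subseteq> affine hull K" using Pa ah by force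
    then have "aff_dim P \<le> aff_dim K"
      by (metis aff_dim_affine_hull aff_dim_subset)
    then show False using K by (simp add: facet_of_def)
  qed
  then obtain p where p: "p \<in> P" "inner p a > l" by blast
  have "inner p a' \<noteq> l'"
  proof
    assume "inner p a' = l'"
    then have "p \<in> affine hull K" using ah' by blast
    then show False using ah p(2) by auto
  qed
  moreover have "inner p a' \<ge> l'" using Pa' p(1) by blast
  ultimately have "\<kappa> * (inner p a - l) > 0" using eq[of p] by linarith
  then have "\<kappa> > 0" using p by (simp add: zero_less_mult_iff)
  then show ?thesis using eq that by blast
qed

definition facet_equation :: "'a::euclidean_space set \<Rightarrow> 'a set \<Rightarrow> 'a \<times> real" where
  "facet_equation P K = (SOME (a, l). facet_normal P K a l)"

text \<open>Any choice of normal will do: by \<open>facet_normal_unique_up_to_scale\<close>, the slack is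
  determined up to a positive factor, so its sign is intrinsic.\<close>

definition facet_slack :: "'a::euclidean_space set \<Rightarrow> 'a set \<Rightarrow> 'a \<Rightarrow> real" where
  "facet_slack P K x = inner x (fst (facet_equation P K)) - snd (facet_equation P K)"

lemma facet_slack_extrapolate:
  "facet_slack P K (x + t *\<^sub>R (x - v)) = (1 + t) * facet_slack P K x - t * facet_slack P K v"
  by (simp add: facet_slack_def inner_simps algebra_simps)

lemma facet_slack_convex_comb:
  "facet_slack P K ((1 - m) *\<^sub>R p + m *\<^sub>R w) = (1 - m) * facet_slack P K p + m * facet_slack P K w"
  by (simp add: facet_slack_def inner_simps algebra_simps)

text \<open>For positive weights this affine function is nonnegative on P and vanishes there exactly
  on F. Choosing the weights so that its value at w is positive resp. zero makes it a supporting
  function of conv(P \<union> {w}) cutting out F resp. conv(F \<union> {w}).\<close>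

definition weighted_slack ::
    "'a::euclidean_space set \<Rightarrow> 'a set \<Rightarrow> ('a set \<Rightarrow> real) \<Rightarrow> 'a \<Rightarrow> real" where
  "weighted_slack P F lam x = (\<Sum>K\<in>{K. K facet_of P \<and> F \<subseteq> K}. lam K * facet_slack P K x)"

lemma weighted_slack_convex_comb:
  "weighted_slack P F lam ((1 - m) *\<^sub>R p + m *\<^sub>R w) =
     (1 - m) * weighted_slack P F lam p + m * weighted_slack P F lam w"
  unfolding weighted_slack_def facet_slack_convex_comb
  by (simp add: sum_distrib_left sum.distrib[symmetric] algebra_simps)

lemma weighted_slack_affine: "\<exists>c b. \<forall>x. weighted_slack P F lam x = inner c x - b"
proof (intro exI allI)
  fix x
  show "weighted_slack P F lam x =
      inner (\<Sum>K\<in>{K. K facet_of P \<and> F \<subseteq> K}. lam K *\<^sub>R fst (facet_equation P K)) x -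
      (\<Sum>K\<in>{K. K facet_of P \<and> F \<subseteq> K}. lam K * snd (facet_equation P K))"
    by (simp add: weighted_slack_def facet_slack_def inner_sum_left sum_subtractf
        right_diff_distrib inner_commute[of x])
qed

definition beneath_facet_through :: "'a::euclidean_space set \<Rightarrow> 'a \<Rightarrow> 'a set \<Rightarrow> bool" where
  "beneath_facet_through P v F \<longleftrightarrow> (\<exists>K. K facet_of P \<and> F \<subseteq> K \<and> facet_slack P K v > 0)"

definition mixed_slacks_through :: "'a::euclidean_space set \<Rightarrow> 'a \<Rightarrow> 'a set \<Rightarrow> bool" where
  "mixed_slacks_through P v F \<longleftrightarrow> F = {} \<or>
     (\<forall>K. K facet_of P \<and> F \<subseteq> K \<longrightarrow> facet_slack P K v = 0) \<or>
     ((\<exists>K. K facet_of P \<and> F \<subseteq> K \<and> facet_slack P K v > 0) \<and>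
      (\<exists>K. K facet_of P \<and> F \<subseteq> K \<and> facet_slack P K v < 0))"

definition same_facet_signs :: "'a::euclidean_space set \<Rightarrow> 'a \<Rightarrow> 'a \<Rightarrow> bool" where
  "same_facet_signs P v w \<longleftrightarrow>
     (\<forall>K. K facet_of P \<longrightarrow> sgn (facet_slack P K v) = sgn (facet_slack P K w))"

lemma same_facet_signs_sym: "same_facet_signs P v w \<Longrightarrow> same_facet_signs P w v"
  by (simp add: same_facet_signs_def)

lemma same_facet_signs_iffs:
  assumes "same_facet_signs P v w" and "K facet_of P"
  shows "facet_slack P K v > 0 \<longleftrightarrow> facet_slack P K w > 0"
    and "facet_slack P K v < 0 \<longleftrightarrow> facet_slack P K w < 0"
    and "facet_slack P K v = 0 \<longleftrightarrow> facet_slack P K w = 0"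
  using assms unfolding same_facet_signs_def
  by (metis sgn_greater, metis sgn_less, metis sgn_0_0 sgn_eq_0_iff)

lemma beneath_facet_through_transfer:
  "same_facet_signs P v w \<Longrightarrow> beneath_facet_through P v F \<Longrightarrow> beneath_facet_through P w F"
  unfolding beneath_facet_through_def using same_facet_signs_iffs(1) by blast

lemma mixed_slacks_through_transfer:
  "same_facet_signs P v w \<Longrightarrow> mixed_slacks_through P v F \<Longrightarrow> mixed_slacks_through P w F"
  unfolding mixed_slacks_through_def using same_facet_signs_iffs by meson

locale full_dim_polytope =
  fixes P :: "'a::euclidean_space set"
  assumes full_polytope: "full_polytope P"
begin

lemma P_polytope: "polytope P"
  using full_polytope by (simp add: full_polytope_def)

lemma P_polyhedron: "polyhedron P"
  by (simp add: P_polytope polytope_imp_polyhedron)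

lemma P_convex: "convex P"
  by (simp add: P_polyhedron polyhedron_imp_convex)

lemma P_affine_hull: "affine hull P = UNIV"
  using full_polytope aff_dim_eq_full by (auto simp: full_polytope_def)

lemma finite_facets: "finite {K. K facet_of P}"
  by (rule finite_subset[OF _ finite_polytope_faces[OF P_polytope]]) (auto simp: facet_of_imp_face_of)

lemma finite_facets_through: "finite {K. K facet_of P \<and> F \<subseteq> K}"
  using finite_facets by (rule finite_subset[rotated]) auto

lemma facet_normal_of_supporting_hyperplane:
  assumes K: "K facet_of P" and "a \<noteq> 0" and "P \<subseteq> {x. a \<bullet> x \<le> b}" and "K = P \<inter> {x. a \<bullet> x = b}"
  shows "facet_normal P K (- a) (- b)"
proof -
  have "affine hull K \<subseteq> {x. a \<bullet> x = b}"
    using assms by (intro hull_minimal) (auto simp: affine_hyperplane)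
  moreover have "aff_dim (affine hull K) = aff_dim {x. a \<bullet> x = b}"
    using K full_polytope \<open>a \<noteq> 0\<close> by (simp add: facet_of_def full_polytope_def aff_dim_hyperplane)
  moreover have "affine hull K \<noteq> {}"
    using K by (simp add: facet_of_def)
  ultimately have "affine hull K = {x. a \<bullet> x = b}"
    by (intro affine_dim_equal) (auto simp: affine_hyperplane)
  then show ?thesis
    using assms by (auto simp: facet_normal_def inner_commute)
qed

lemma facet_normal_facet_equation:
  assumes K: "K facet_of P"
  shows "facet_normal P K (fst (facet_equation P K)) (snd (facet_equation P K))"
proof -
  obtain a b where "a \<noteq> 0" "P \<subseteq> {x. a \<bullet> x \<le> b}" "K = P \<inter> {x. a \<bullet> x = b}"
    using facet_of_polyhedron[OF P_polyhedron K] by blast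
  then have "facet_normal P K (- a) (- b)"
    by (rule facet_normal_of_supporting_hyperplane[OF K])
  then show ?thesis
    using someI[of "\<lambda>(a, l). facet_normal P K a l" "(- a, - b)"]
    by (simp add: facet_equation_def case_prod_beta)
qed

lemma facet_slack_pos_multiple:
  assumes K: "K facet_of P" and n: "facet_normal P K a l"
  obtains \<kappa> where "\<kappa> > 0" and "\<And>x. facet_slack P K x = \<kappa> * (inner x a - l)"
  using facet_normal_unique_up_to_scale[OF K n facet_normal_facet_equation[OF K]]
  unfolding facet_slack_def by blast

lemma facet_slack_nonneg: "K facet_of P \<Longrightarrow> x \<in> P \<Longrightarrow> facet_slack P K x \<ge> 0"
  using facet_normal_facet_equation by (force simp: facet_normal_def facet_slack_def)

lemma facet_slack_eq_0_iff:
  assumes K: "K facet_of P" and x: "x \<in> P"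
  shows "facet_slack P K x = 0 \<longleftrightarrow> x \<in> K"
proof -
  have "K = affine hull K \<inter> P"
    using K P_convex face_of_imp_eq_affine_Int facet_of_imp_face_of by blast
  moreover have "affine hull K = {x. facet_slack P K x = 0}"
    using facet_normal_facet_equation[OF K] by (simp add: facet_normal_def facet_slack_def)
  ultimately show ?thesis
    using x by blast
qed

lemma facet_slack_affine_hull: "K facet_of P \<Longrightarrow> x \<in> affine hull K \<Longrightarrow> facet_slack P K x = 0"
  using facet_normal_facet_equation by (force simp: facet_normal_def facet_slack_def)

lemma facet_slack_neg_if_Hminus:
  assumes K: "K facet_of P" and x: "x \<in> Hminus P K"
  shows "facet_slack P K x < 0"
proof -
  obtain a l where n: "facet_normal P K a l" and "inner x a < l"
    using x by (auto simp: Hminus_def)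
  then show ?thesis
    using facet_slack_pos_multiple[OF K n] by (metis diff_less_0_iff_less mult_pos_neg)
qed

lemma facet_slack_pos_if_Hplus:
  assumes K: "K facet_of P" and x: "x \<in> Hplus P K"
  shows "facet_slack P K x > 0"
proof -
  obtain a l where n: "facet_normal P K a l" and "inner x a > l"
    using x by (auto simp: Hplus_def)
  then show ?thesis
    using facet_slack_pos_multiple[OF K n] by (metis diff_gt_0_iff_gt mult_pos_pos)
qed

lemma mem_P_if_facet_slacks_nonneg:
  assumes y: "\<And>K. K facet_of P \<Longrightarrow> facet_slack P K y \<ge> 0"
  shows "y \<in> P"
proof -
  obtain H where "finite H" and seq: "P = affine hull P \<inter> \<Inter>H"
    and H: "\<And>h. h \<in> H \<Longrightarrow> \<exists>a b. a \<noteq> 0 \<and> h = {x. a \<bullet> x \<le> b}"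
    and min: "\<And>H'. H' \<subset> H \<Longrightarrow> P \<subset> (affine hull P) \<inter> \<Inter>H'"
    using P_polyhedron by (simp add: polyhedron_Int_affine_minimal) meson
  then obtain a b where ab: "\<And>h. h \<in> H \<Longrightarrow> a h \<noteq> 0 \<and> h = {x. a h \<bullet> x \<le> b h}"
    by metis
  have "y \<in> h" if h: "h \<in> H" for h
  proof -
    define K where "K = P \<inter> {x. a h \<bullet> x = b h}"
    have K: "K facet_of P"
      using facet_of_polyhedron_explicit[OF \<open>finite H\<close> seq ab min] h K_def by blast
    have "P \<subseteq> {x. a h \<bullet> x \<le> b h}"
      using h ab seq by blast
    then have "facet_normal P K (- a h) (- b h)"
      using facet_normal_of_supporting_hyperplane[OF K] ab h K_def by blast
    then obtain \<kappa> where "\<kappa> > 0" and "facet_slack P K y = \<kappa> * (inner y (- a h) - (- b h))"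
      using facet_slack_pos_multiple[OF K] by metis
    then have "inner y (- a h) + b h \<ge> 0"
      using y[OF K] by (simp add: zero_le_mult_iff)
    then show ?thesis
      using ab[OF h] by (auto simp: inner_commute)
  qed
  then show ?thesis
    using seq P_affine_hull by auto
qed

lemma P_subset_hull_insert: "P \<subseteq> convex hull (insert w P)"
  by (rule subset_trans[OF subset_insertI hull_subset])

lemma polytope_hull_insert: "polytope (convex hull (insert w P))"
proof -
  obtain V where "finite V" and "P = convex hull V"
    using P_polytope polytope_def by blast
  then show ?thesis
    by (metis hull_insert polytope_convex_hull finite_insert)
qed

lemma mem_hull_insert_P:
  assumes "y \<in> convex hull (insert w P)"
  obtains m p where "0 \<le> m" and "m \<le> 1" and "p \<in> P" and "y = (1 - m) *\<^sub>R p + m *\<^sub>R w"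
proof -
  have "P \<noteq> {}"
    using P_affine_hull by auto
  then obtain u v p where "u \<ge> 0" "v \<ge> 0" "u + v = 1" "p \<in> P" "y = u *\<^sub>R w + v *\<^sub>R p"
    using assms convex_hull_insert[of P w] convex_hull_eq[of P] P_convex by auto
  then show ?thesis
    using that[of u p] by (simp add: add.commute eq_diff_eq)
qed

lemma singleton_face_of_hull_insert:
  assumes "w \<notin> P"
  shows "{w} face_of convex hull (insert w P)"
proof -
  obtain V where "finite V" and P: "P = convex hull V"
    using P_polytope polytope_def by blast
  then have "w extreme_point_of convex hull (insert w V)"
    using assms extreme_point_of_convex_hull_insert by blast
  then show ?thesis
    by (metis P face_of_singleton hull_insert)
qed

lemma line_through_rel_interior_in_P:
  assumes F: "F face_of P" and x: "x \<in> rel_interior F"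
  obtains t where "t > 0" and "\<And>\<tau>. \<bar>\<tau>\<bar> \<le> t \<Longrightarrow>
      (\<And>K. K facet_of P \<Longrightarrow> F \<subseteq> K \<Longrightarrow> \<tau> * facet_slack P K v \<le> 0) \<Longrightarrow> x + \<tau> *\<^sub>R (x - v) \<in> P"
proof -
  define I where "I = {K. K facet_of P \<and> \<not> F \<subseteq> K}"
  have xF: "x \<in> F" and xP: "x \<in> P"
    using x rel_interior_subset face_of_imp_subset[OF F] by blast+
  have pos: "facet_slack P K x > 0" if "K \<in> I" for K
  proof -
    have K: "K facet_of P" and "\<not> F \<subseteq> K"
      using that by (auto simp: I_def)
    then have "x \<notin> K"
      using subset_of_face_of[OF facet_of_imp_face_of[OF K] face_of_imp_subset[OF F]] x by blast
    then show ?thesis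
      using facet_slack_nonneg[OF K xP] facet_slack_eq_0_iff[OF K xP] by linarith
  qed
  have "finite I"
    using finite_facets by (rule finite_subset[rotated]) (auto simp: I_def)
  then obtain t where "t > 0" and t: "\<And>K \<tau>. K \<in> I \<Longrightarrow> \<bar>\<tau>\<bar> \<le> t \<Longrightarrow>
      (1 + \<tau>) * facet_slack P K x - \<tau> * facet_slack P K v > 0"
    using finite_uniform_perturbation[of I "\<lambda>K. facet_slack P K x" "\<lambda>K. facet_slack P K v"] pos
    by blast
  show ?thesis
  proof (rule that[OF \<open>t > 0\<close>], rule mem_P_if_facet_slacks_nonneg)
    fix \<tau> K assume \<tau>: "\<bar>\<tau>\<bar> \<le> t" and sign: "\<And>K. K facet_of P \<Longrightarrow> F \<subseteq> K \<Longrightarrow> \<tau> * facet_slack P K v \<le> 0"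
      and K: "K facet_of P"
    show "facet_slack P K (x + \<tau> *\<^sub>R (x - v)) \<ge> 0"
    proof (cases "F \<subseteq> K")
      case True
      then have "facet_slack P K x = 0"
        using facet_slack_eq_0_iff[OF K xP] xF by blast
      then show ?thesis
        using sign[OF K True] by (simp add: facet_slack_extrapolate)
    next
      case False
      then show ?thesis
        using t[of K \<tau>] \<tau> K by (simp add: facet_slack_extrapolate I_def)
    qed
  qed
qed

lemma face_point_line_in_P:
  assumes F: "F face_of P" and "F \<noteq> {}"
  obtains x t where "x \<in> F" and "t > 0" and "\<And>\<tau>. \<bar>\<tau>\<bar> \<le> t \<Longrightarrow>
      (\<And>K. K facet_of P \<Longrightarrow> F \<subseteq> K \<Longrightarrow> \<tau> * facet_slack P K v \<le> 0) \<Longrightarrow> x + \<tau> *\<^sub>R (x - v) \<in> P"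
proof -
  obtain x where x: "x \<in> rel_interior F"
    using \<open>F \<noteq> {}\<close> face_of_imp_convex[OF F] rel_interior_eq_empty by blast
  obtain t where "t > 0" and line: "\<And>\<tau>. \<bar>\<tau>\<bar> \<le> t \<Longrightarrow>
      (\<And>K. K facet_of P \<Longrightarrow> F \<subseteq> K \<Longrightarrow> \<tau> * facet_slack P K v \<le> 0) \<Longrightarrow> x + \<tau> *\<^sub>R (x - v) \<in> P"
    using line_through_rel_interior_in_P[OF F x, where v = v] by blast
  have "x \<in> F"
    using x rel_interior_subset by blast
  from that[OF this \<open>t > 0\<close> line] show ?thesis .
qed

lemma weighted_slack_nonneg:
  assumes "\<And>K. K facet_of P \<Longrightarrow> F \<subseteq> K \<Longrightarrow> lam K \<ge> 0" and "x \<in> P"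
  shows "weighted_slack P F lam x \<ge> 0"
  unfolding weighted_slack_def using assms facet_slack_nonneg by (intro sum_nonneg) auto

lemma weighted_slack_eq_0_iff:
  assumes F: "F face_of P" "F \<noteq> {}" "F \<noteq> P"
    and lam: "\<And>K. K facet_of P \<Longrightarrow> F \<subseteq> K \<Longrightarrow> lam K > 0" and x: "x \<in> P"
  shows "weighted_slack P F lam x = 0 \<longleftrightarrow> x \<in> F"
proof -
  have "0 \<le> lam K * facet_slack P K x" if "K \<in> {K. K facet_of P \<and> F \<subseteq> K}" for K
    using that lam facet_slack_nonneg[OF _ x] by (simp add: less_imp_le)
  then have "weighted_slack P F lam x = 0 \<longleftrightarrow>
      (\<forall>K\<in>{K. K facet_of P \<and> F \<subseteq> K}. lam K * facet_slack P K x = 0)"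
    unfolding weighted_slack_def by (intro sum_nonneg_eq_0_iff finite_facets_through)
  also have "\<dots> \<longleftrightarrow> (\<forall>K\<in>{K. K facet_of P \<and> F \<subseteq> K}. x \<in> K)"
    using lam facet_slack_eq_0_iff[OF _ x] by (metis (mono_tags) less_irrefl mem_Collect_eq mult_eq_0_iff)
  also have "\<dots> \<longleftrightarrow> x \<in> \<Inter>{K. K facet_of P \<and> F \<subseteq> K}"
    by (rule Inter_iff[symmetric])
  also have "\<dots> \<longleftrightarrow> x \<in> F"
    by (simp only: face_of_polyhedron[OF P_polyhedron F, symmetric])
  finally show ?thesis .
qed

lemma weighted_slack_zero_face_of_hull_insert:
  assumes lam: "\<And>K. K facet_of P \<Longrightarrow> F \<subseteq> K \<Longrightarrow> lam K \<ge> 0"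
    and w: "weighted_slack P F lam w \<ge> 0"
  shows "(convex hull (insert w P) \<inter> {x. weighted_slack P F lam x = 0}) face_of
      convex hull (insert w P)"
proof -
  obtain c b where cb: "\<And>x. weighted_slack P F lam x = inner c x - b"
    using weighted_slack_affine by blast
  have "c \<bullet> y \<ge> b" if y: "y \<in> convex hull (insert w P)" for y
  proof -
    obtain m p where "0 \<le> m" "m \<le> 1" "p \<in> P" and "y = (1 - m) *\<^sub>R p + m *\<^sub>R w"
      using mem_hull_insert_P[OF y] .
    then have "weighted_slack P F lam y \<ge> 0"
      using weighted_slack_nonneg[OF lam] w by (simp add: weighted_slack_convex_comb)
    then show ?thesis
      using cb by simp
  qed
  then have "(convex hull (insert w P) \<inter> {x. c \<bullet> x = b}) face_of convex hull (insert w P)"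
    by (intro face_of_Int_supporting_hyperplane_ge) auto
  then show ?thesis
    using cb by simp
qed

lemma hull_insert_Int_slack_zero_eq_face:
  assumes F: "F face_of P" "F \<noteq> {}" "F \<noteq> P"
    and lam: "\<And>K. K facet_of P \<Longrightarrow> F \<subseteq> K \<Longrightarrow> lam K > 0"
    and w: "weighted_slack P F lam w > 0"
  shows "convex hull (insert w P) \<inter> {x. weighted_slack P F lam x = 0} = F"
proof
  show "convex hull (insert w P) \<inter> {x. weighted_slack P F lam x = 0} \<subseteq> F"
  proof
    fix y assume y: "y \<in> convex hull (insert w P) \<inter> {x. weighted_slack P F lam x = 0}"
    then obtain m p where m: "0 \<le> m" "m \<le> 1" and p: "p \<in> P" and y_eq: "y = (1 - m) *\<^sub>R p + m *\<^sub>R w"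
      using mem_hull_insert_P by blast
    have "weighted_slack P F lam p \<ge> 0"
      by (rule weighted_slack_nonneg[OF _ p]) (simp add: lam less_imp_le)
    then have "(1 - m) * weighted_slack P F lam p \<ge> 0"
      using m by simp
    moreover have "(1 - m) * weighted_slack P F lam p + m * weighted_slack P F lam w = 0"
      using y y_eq by (simp add: weighted_slack_convex_comb)
    moreover have "m * weighted_slack P F lam w \<ge> 0"
      using m w by simp
    ultimately have "m * weighted_slack P F lam w = 0"
      by linarith
    then have "m = 0"
      using w by simp
    then show "y \<in> F"
      using y y_eq weighted_slack_eq_0_iff[where lam = lam, OF F lam p] by simp
  qed
  show "F \<subseteq> convex hull (insert w P) \<inter> {x. weighted_slack P F lam x = 0}"
  proof
    fix y assume "y \<in> F"
    moreover have "y \<in> P"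
      using \<open>y \<in> F\<close> face_of_imp_subset[OF F(1)] by blast
    ultimately show "y \<in> convex hull (insert w P) \<inter> {x. weighted_slack P F lam x = 0}"
      using weighted_slack_eq_0_iff[where lam = lam, OF F lam \<open>y \<in> P\<close>] P_subset_hull_insert by blast
  qed
qed

lemma hull_insert_Int_slack_zero_eq_pyramid:
  assumes F: "F face_of P" "F \<noteq> {}" "F \<noteq> P"
    and lam: "\<And>K. K facet_of P \<Longrightarrow> F \<subseteq> K \<Longrightarrow> lam K > 0"
    and w: "weighted_slack P F lam w = 0"
  shows "convex hull (insert w P) \<inter> {x. weighted_slack P F lam x = 0} = convex hull (insert w F)"
proof
  show "convex hull (insert w P) \<inter> {x. weighted_slack P F lam x = 0} \<subseteq> convex hull (insert w F)"
  proof
    fix y assume y: "y \<in> convex hull (insert w P) \<inter> {x. weighted_slack P F lam x = 0}"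
    then obtain m p where m: "0 \<le> m" "m \<le> 1" and p: "p \<in> P" and y_eq: "y = (1 - m) *\<^sub>R p + m *\<^sub>R w"
      using mem_hull_insert_P by blast
    have "(1 - m) * weighted_slack P F lam p = 0"
      using y y_eq w by (simp add: weighted_slack_convex_comb)
    then consider "m = 1" | "p \<in> F"
      using weighted_slack_eq_0_iff[where lam = lam, OF F lam p] by auto
    then show "y \<in> convex hull (insert w F)"
    proof cases
      case 1
      then show ?thesis using y_eq by (simp add: hull_inc)
    next
      case 2
      then show ?thesis
        using convexD[OF convex_convex_hull, of p "insert w F" w "1 - m" m] m y_eq
        by (simp add: hull_inc)
    qed
  qed
  obtain c b where cb: "\<And>x. weighted_slack P F lam x = inner c x - b"
    using weighted_slack_affine by blast
  have "convex {x. weighted_slack P F lam x = 0}"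
    using convex_hyperplane[of c b] cb by simp
  moreover have "insert w F \<subseteq> {x. weighted_slack P F lam x = 0}"
    using w weighted_slack_eq_0_iff[where lam = lam, OF F lam] face_of_imp_subset[OF F(1)] by auto
  ultimately have "convex hull (insert w F) \<subseteq> {x. weighted_slack P F lam x = 0}"
    by (intro hull_minimal)
  moreover have "convex hull (insert w F) \<subseteq> convex hull (insert w P)"
    using face_of_imp_subset[OF F(1)] by (intro hull_mono) auto
  ultimately show "convex hull (insert w F) \<subseteq> convex hull (insert w P) \<inter> {x. weighted_slack P F lam x = 0}"
    by blast
qed

lemma face_of_hull_insert_if_beneath:
  assumes F: "F face_of P" "F \<noteq> {}" and "beneath_facet_through P w F"
  shows "F face_of convex hull (insert w P)"
proof -
  obtain k where k: "k facet_of P" "F \<subseteq> k" "facet_slack P k w > 0"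
    using assms(3) by (auto simp: beneath_facet_through_def)
  then have "F \<noteq> P"
    by (metis facet_of_imp_subset facet_of_irrefl subset_antisym)
  obtain lam where "\<forall>K\<in>{K. K facet_of P \<and> F \<subseteq> K}. lam K > 0"
    and "(\<Sum>K\<in>{K. K facet_of P \<and> F \<subseteq> K}. lam K * facet_slack P K w) > 0"
    using exists_pos_weights_sum_pos[OF finite_facets_through, of k F "\<lambda>K. facet_slack P K w"] k
    by blast
  then have lam: "\<And>K. K facet_of P \<Longrightarrow> F \<subseteq> K \<Longrightarrow> lam K > 0"
    and w: "weighted_slack P F lam w > 0"
    by (simp_all add: weighted_slack_def)
  have "(convex hull (insert w P) \<inter> {x. weighted_slack P F lam x = 0}) face_of
      convex hull (insert w P)"
    using lam w by (intro weighted_slack_zero_face_of_hull_insert) (auto intro: less_imp_le)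
  then show ?thesis
    by (simp only: hull_insert_Int_slack_zero_eq_face[OF F \<open>F \<noteq> P\<close> lam w])
qed

lemma exists_weights_slack_zero:
  assumes "F \<noteq> {}" and "mixed_slacks_through P w F"
  obtains lam where "\<And>K. K facet_of P \<Longrightarrow> F \<subseteq> K \<Longrightarrow> lam K > 0"
    and "weighted_slack P F lam w = 0"
proof -
  consider "\<forall>K. K facet_of P \<and> F \<subseteq> K \<longrightarrow> facet_slack P K w = 0"
    | p n where "p facet_of P" "F \<subseteq> p" "facet_slack P p w > 0"
        "n facet_of P" "F \<subseteq> n" "facet_slack P n w < 0"
    using assms by (auto simp: mixed_slacks_through_def)
  then show ?thesis
  proof cases
    case 1
    then show ?thesis
      using that[of "\<lambda>_. 1"] by (simp add: weighted_slack_def)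
  next
    case 2
    then obtain lam where "\<forall>K\<in>{K. K facet_of P \<and> F \<subseteq> K}. lam K > 0"
      and "(\<Sum>K\<in>{K. K facet_of P \<and> F \<subseteq> K}. lam K * facet_slack P K w) = 0"
      using exists_pos_weights_sum_zero[OF finite_facets_through, of p F "\<lambda>K. facet_slack P K w" n]
      by blast
    then show ?thesis
      using that[of lam] by (simp add: weighted_slack_def)
  qed
qed

lemma pyramid_face_of_hull_insert:
  assumes w: "w \<notin> P" and F: "F face_of P" and mixed: "mixed_slacks_through P w F"
  shows "convex hull (insert w F) face_of convex hull (insert w P) \<and>
    convex hull (insert w F) \<inter> P = F"
proof -
  consider "F = {}" | "F = P" | "F \<noteq> {}" "F \<noteq> P"
    by blast
  then show ?thesis
  proof cases
    case 1
    then show ?thesis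
      using singleton_face_of_hull_insert[OF w] w by simp
  next
    case 2
    then show ?thesis
      using P_subset_hull_insert face_of_refl[OF convex_convex_hull] by auto
  next
    case 3
    obtain lam where lam: "\<And>K. K facet_of P \<Longrightarrow> F \<subseteq> K \<Longrightarrow> lam K > 0"
      and w0: "weighted_slack P F lam w = 0"
      using exists_weights_slack_zero[OF 3(1) mixed] by blast
    have eq: "convex hull (insert w P) \<inter> {x. weighted_slack P F lam x = 0} = convex hull (insert w F)"
      by (rule hull_insert_Int_slack_zero_eq_pyramid[OF F 3 lam w0])
    have "(convex hull (insert w P) \<inter> {x. weighted_slack P F lam x = 0}) face_of
        convex hull (insert w P)"
      using lam w0 by (intro weighted_slack_zero_face_of_hull_insert) (auto intro: less_imp_le)
    moreover have "convex hull (insert w F) \<inter> P = {x \<in> P. weighted_slack P F lam x = 0}"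
      using eq[symmetric] P_subset_hull_insert by auto
    moreover have "\<dots> = F"
      using weighted_slack_eq_0_iff[where lam = lam, OF F 3 lam] face_of_imp_subset[OF F] by auto
    ultimately show ?thesis
      by (simp only: eq)
  qed
qed

lemma beneath_if_supporting_hyperplane_avoids:
  assumes P: "P \<subseteq> {x. c \<bullet> x \<le> b}" and v: "c \<bullet> v < b"
    and G: "G = P \<inter> {x. c \<bullet> x = b}" and "G \<noteq> {}"
  shows "beneath_facet_through P v G"
proof (rule ccontr)
  assume "\<not> beneath_facet_through P v G"
  then have nonpos: "\<And>K. K facet_of P \<Longrightarrow> G \<subseteq> K \<Longrightarrow> facet_slack P K v \<le> 0"
    by (auto simp: beneath_facet_through_def not_less)
  have "G face_of P"
    using P G by (auto intro: face_of_Int_supporting_hyperplane_le[OF P_convex])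
  then obtain x t where "x \<in> G" and "t > 0" and line: "\<And>\<tau>. \<bar>\<tau>\<bar> \<le> t \<Longrightarrow>
      (\<And>K. K facet_of P \<Longrightarrow> G \<subseteq> K \<Longrightarrow> \<tau> * facet_slack P K v \<le> 0) \<Longrightarrow> x + \<tau> *\<^sub>R (x - v) \<in> P"
    using face_point_line_in_P \<open>G \<noteq> {}\<close> by metis
  have "x + t *\<^sub>R (x - v) \<in> P"
    using \<open>t > 0\<close> nonpos by (intro line) (auto simp: mult_nonneg_nonpos)
  then have "c \<bullet> (x + t *\<^sub>R (x - v)) \<le> b"
    using P by blast
  moreover have "c \<bullet> x = b"
    using \<open>x \<in> G\<close> G by blast
  then have "c \<bullet> (x + t *\<^sub>R (x - v)) = b + t * (b - c \<bullet> v)"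
    by (simp add: inner_simps)
  moreover have "t * (b - c \<bullet> v) > 0"
    using \<open>t > 0\<close> v by simp
  ultimately show False
    by linarith
qed

lemma facet_slack_eq_0_if_line_in_facet:
  assumes K: "K facet_of P" and "x \<in> K" and "x + \<tau> *\<^sub>R (x - v) \<in> K" and "\<tau> \<noteq> 0"
  shows "facet_slack P K v = 0"
proof -
  have "facet_slack P K x = 0" and "facet_slack P K (x + \<tau> *\<^sub>R (x - v)) = 0"
    using assms facet_slack_eq_0_iff[OF K] facet_of_imp_subset[OF K] by blast+
  then show ?thesis
    using \<open>\<tau> \<noteq> 0\<close> by (simp add: facet_slack_extrapolate)
qed

lemma mixed_slacks_if_supporting_hyperplane_contains:
  assumes P: "P \<subseteq> {x. c \<bullet> x \<le> b}" and v: "c \<bullet> v = b" and G: "G = P \<inter> {x. c \<bullet> x = b}"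
  shows "mixed_slacks_through P v G"
proof (cases "G = {}")
  case True
  then show ?thesis by (simp add: mixed_slacks_through_def)
next
  case False
  have "G face_of P"
    using P G by (auto intro: face_of_Int_supporting_hyperplane_le[OF P_convex])
  then obtain x t where xG: "x \<in> G" and "t > 0" and line: "\<And>\<tau>. \<bar>\<tau>\<bar> \<le> t \<Longrightarrow>
      (\<And>K. K facet_of P \<Longrightarrow> G \<subseteq> K \<Longrightarrow> \<tau> * facet_slack P K v \<le> 0) \<Longrightarrow> x + \<tau> *\<^sub>R (x - v) \<in> P"
    using face_point_line_in_P False by metis
  have vanish: "facet_slack P K v = 0"
    if \<tau>: "\<bar>\<tau>\<bar> = t" and sign: "\<And>K. K facet_of P \<Longrightarrow> G \<subseteq> K \<Longrightarrow> \<tau> * facet_slack P K v \<le> 0"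
      and K: "K facet_of P" "G \<subseteq> K" for \<tau> K
  proof -
    have "x + \<tau> *\<^sub>R (x - v) \<in> P"
      using line \<tau> sign by simp
    moreover have "c \<bullet> (x + \<tau> *\<^sub>R (x - v)) = b"
      using xG G v by (simp add: inner_simps)
    ultimately have "x + \<tau> *\<^sub>R (x - v) \<in> K"
      using G K(2) by blast
    moreover have "\<tau> \<noteq> 0"
      using \<tau> \<open>t > 0\<close> by auto
    ultimately show ?thesis
      using facet_slack_eq_0_if_line_in_facet[OF K(1)] xG K(2) by blast
  qed
  consider "\<And>K. K facet_of P \<Longrightarrow> G \<subseteq> K \<Longrightarrow> facet_slack P K v \<le> 0"
    | "\<And>K. K facet_of P \<Longrightarrow> G \<subseteq> K \<Longrightarrow> facet_slack P K v \<ge> 0"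
    | "\<exists>K. K facet_of P \<and> G \<subseteq> K \<and> facet_slack P K v > 0"
      "\<exists>K. K facet_of P \<and> G \<subseteq> K \<and> facet_slack P K v < 0"
    by (meson not_le)
  then show ?thesis
  proof cases
    case 1
    then have "facet_slack P K v = 0" if "K facet_of P" "G \<subseteq> K" for K
      using \<open>t > 0\<close> by (intro vanish[of t, OF _ _ that]) (auto simp: mult_nonneg_nonpos)
    then show ?thesis by (simp add: mixed_slacks_through_def)
  next
    case 2
    then have "facet_slack P K v = 0" if "K facet_of P" "G \<subseteq> K" for K
      using \<open>t > 0\<close> by (intro vanish[of "- t", OF _ _ that]) (auto simp: mult_nonpos_nonneg)
    then show ?thesis by (simp add: mixed_slacks_through_def)
  next
    case 3
    then show ?thesis by (auto simp: mixed_slacks_through_def)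
  qed
qed

lemma face_of_hull_insert_exposed:
  assumes "G face_of convex hull (insert v P)"
  obtains c b where "convex hull (insert v P) \<subseteq> {x. c \<bullet> x \<le> b}"
    and "G = convex hull (insert v P) \<inter> {x. c \<bullet> x = b}"
proof -
  have "G exposed_face_of convex hull (insert v P)"
    using exposed_face_of_polyhedron[OF polytope_imp_polyhedron[OF polytope_hull_insert]] assms
    by simp
  then show ?thesis
    unfolding exposed_face_of_def using that by metis
qed

lemma face_of_hull_insert_generators:
  assumes "G face_of convex hull (insert v P)"
  obtains S' where "S' \<subseteq> insert v P" and "S' \<subseteq> G" and "G = convex hull S'"
proof -
  obtain S' where "S' \<subseteq> insert v P" and "G = convex hull S'"
    using face_of_convex_hull_subset[OF compact_insert[OF polytope_imp_compact[OF P_polytope]] assms] .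
  moreover have "S' \<subseteq> convex hull S'"
    by (rule hull_subset)
  ultimately show ?thesis
    using that by simp
qed

lemma face_of_hull_insert_without_apex:
  assumes G: "G face_of convex hull (insert v P)" and "v \<notin> G"
  shows "G face_of P \<and> (G \<noteq> {} \<longrightarrow> beneath_facet_through P v G)"
proof -
  obtain S' where "S' \<subseteq> insert v P" and "S' \<subseteq> G" and G_hull: "G = convex hull S'"
    using face_of_hull_insert_generators[OF G] .
  then have "S' \<subseteq> P"
    using \<open>v \<notin> G\<close> by blast
  then have GP: "G \<subseteq> P"
    unfolding G_hull by (rule hull_minimal) (rule P_convex)
  obtain c b where Q: "convex hull (insert v P) \<subseteq> {x. c \<bullet> x \<le> b}"
    and G_eq: "G = convex hull (insert v P) \<inter> {x. c \<bullet> x = b}"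
    using face_of_hull_insert_exposed[OF G] .
  have "v \<in> convex hull (insert v P)"
    by (simp add: hull_inc)
  then have "c \<bullet> v \<le> b" and "c \<bullet> v \<noteq> b"
    using Q G_eq \<open>v \<notin> G\<close> by blast+
  then have "c \<bullet> v < b"
    by linarith
  moreover have "P \<subseteq> {x. c \<bullet> x \<le> b}"
    using Q P_subset_hull_insert by blast
  moreover have "G = P \<inter> {x. c \<bullet> x = b}"
    using G_eq GP P_subset_hull_insert by auto
  ultimately have "G \<noteq> {} \<longrightarrow> beneath_facet_through P v G"
    using beneath_if_supporting_hyperplane_avoids by blast
  then show ?thesis
    using face_of_subset[OF G GP P_subset_hull_insert] by blast
qed

lemma face_of_hull_insert_with_apex:
  assumes G: "G face_of convex hull (insert v P)" and "v \<in> G"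
  shows "G = convex hull (insert v (G \<inter> P)) \<and> (G \<inter> P) face_of P \<and>
    mixed_slacks_through P v (G \<inter> P)"
proof -
  obtain S' where "S' \<subseteq> insert v P" and "S' \<subseteq> G" and G_hull: "G = convex hull S'"
    using face_of_hull_insert_generators[OF G] .
  then have "S' \<subseteq> insert v (G \<inter> P)"
    by blast
  then have "G \<subseteq> convex hull (insert v (G \<inter> P))"
    unfolding G_hull by (rule hull_mono)
  moreover have "convex hull (insert v (G \<inter> P)) \<subseteq> G"
    using \<open>v \<in> G\<close> face_of_imp_convex[OF G] by (intro hull_minimal) auto
  ultimately have "G = convex hull (insert v (G \<inter> P))"
    by (rule antisym)
  obtain c b where Q: "convex hull (insert v P) \<subseteq> {x. c \<bullet> x \<le> b}"
    and G_eq: "G = convex hull (insert v P) \<inter> {x. c \<bullet> x = b}"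
    using face_of_hull_insert_exposed[OF G] .
  have P_le: "P \<subseteq> {x. c \<bullet> x \<le> b}"
    using Q P_subset_hull_insert by blast
  have GP: "G \<inter> P = P \<inter> {x. c \<bullet> x = b}"
    using G_eq P_subset_hull_insert by auto
  have "c \<bullet> v = b"
    using \<open>v \<in> G\<close> G_eq by blast
  have "(G \<inter> P) face_of P"
    unfolding GP using P_le by (intro face_of_Int_supporting_hyperplane_le[OF P_convex]) auto
  moreover have "mixed_slacks_through P v (G \<inter> P)"
    by (rule mixed_slacks_if_supporting_hyperplane_contains[OF P_le \<open>c \<bullet> v = b\<close> GP])
  ultimately show ?thesis
    using \<open>G = convex hull (insert v (G \<inter> P))\<close> by blast
qed

end

definition face_transfer :: "'a::euclidean_space set \<Rightarrow> 'a \<Rightarrow> 'a \<Rightarrow> 'a set \<Rightarrow> 'a set" where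
  "face_transfer P v w G = (if v \<in> G then convex hull (insert w (G \<inter> P)) else G)"

context full_dim_polytope
begin

lemma face_transfer_face_of:
  assumes w: "w \<notin> P" and s: "same_facet_signs P v w" and G: "G face_of convex hull (insert v P)"
  shows "face_transfer P v w G face_of convex hull (insert w P)"
proof (cases "v \<in> G")
  case True
  then show ?thesis
    using face_of_hull_insert_with_apex[OF G True] pyramid_face_of_hull_insert[OF w]
      mixed_slacks_through_transfer[OF s]
    by (simp add: face_transfer_def)
next
  case False
  then show ?thesis
    using face_of_hull_insert_without_apex[OF G False] face_of_hull_insert_if_beneath
      beneath_facet_through_transfer[OF s]
    by (cases "G = {}") (simp_all add: face_transfer_def)
qed

lemma face_transfer_inverse:
  assumes w: "w \<notin> P" and s: "same_facet_signs P v w" and G: "G face_of convex hull (insert v P)"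
  shows "face_transfer P w v (face_transfer P v w G) = G"
proof (cases "v \<in> G")
  case True
  then have G_eq: "G = convex hull (insert v (G \<inter> P))" and "(G \<inter> P) face_of P"
    and "mixed_slacks_through P w (G \<inter> P)"
    using face_of_hull_insert_with_apex[OF G] mixed_slacks_through_transfer[OF s] by auto
  then have "convex hull (insert w (G \<inter> P)) \<inter> P = G \<inter> P"
    using pyramid_face_of_hull_insert[OF w] by blast
  moreover have "w \<in> convex hull (insert w (G \<inter> P))"
    by (simp add: hull_inc)
  ultimately show ?thesis
    using True G_eq by (simp add: face_transfer_def)
next
  case False
  then have "w \<notin> G"
    using face_of_hull_insert_without_apex[OF G] w face_of_imp_subset by blast
  then show ?thesis
    using False by (simp add: face_transfer_def)
qed

lemma face_transfer_mono:
  assumes G1: "G1 face_of convex hull (insert v P)" and "G1 \<subseteq> G2"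
  shows "face_transfer P v w G1 \<subseteq> face_transfer P v w G2"
proof (cases "v \<in> G1")
  case True
  have "insert w (G1 \<inter> P) \<subseteq> insert w (G2 \<inter> P)"
    using \<open>G1 \<subseteq> G2\<close> by blast
  then have "convex hull (insert w (G1 \<inter> P)) \<subseteq> convex hull (insert w (G2 \<inter> P))"
    by (rule hull_mono)
  then show ?thesis
    using True \<open>G1 \<subseteq> G2\<close> by (auto simp: face_transfer_def)
next
  case False
  then have "G1 \<subseteq> P"
    using face_of_hull_insert_without_apex[OF G1] face_of_imp_subset by blast
  then have "G1 \<subseteq> convex hull (insert w (G2 \<inter> P))"
    using \<open>G1 \<subseteq> G2\<close> hull_subset by fastforce
  then show ?thesis
    using False \<open>G1 \<subseteq> G2\<close> by (simp add: face_transfer_def)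
qed

theorem comb_equiv_hull_insert_if_same_facet_signs:
  assumes v: "v \<notin> P" and w: "w \<notin> P" and s: "same_facet_signs P v w"
  shows "comb_equiv (convex hull (insert v P)) (convex hull (insert w P))"
proof -
  let ?Qv = "convex hull (insert v P)" and ?Qw = "convex hull (insert w P)"
  note s' = same_facet_signs_sym[OF s]
  have "bij_betw (face_transfer P v w) {F. F face_of ?Qv} {G. G face_of ?Qw}"
    by (rule bij_betw_byWitness[where f' = "face_transfer P w v"])
      (use face_transfer_inverse[OF w s] face_transfer_inverse[OF v s']
        face_transfer_face_of[OF w s] face_transfer_face_of[OF v s'] in auto)
  moreover have "F1 \<subseteq> F2 \<longleftrightarrow> face_transfer P v w F1 \<subseteq> face_transfer P v w F2"
    if F1: "F1 face_of ?Qv" and F2: "F2 face_of ?Qv" for F1 F2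
    using face_transfer_mono[OF F1, of F2 w]
      face_transfer_mono[OF face_transfer_face_of[OF w s F1], of "face_transfer P v w F2" v]
      face_transfer_inverse[OF w s F1] face_transfer_inverse[OF w s F2]
    by auto
  ultimately show ?thesis
    unfolding comb_equiv_def by blast
qed

lemma sgn_facet_slack_VS:
  assumes x: "x \<in> VS P S FF NN" and K: "K facet_of P"
  shows "sgn (facet_slack P K x) = (if K \<in> NN \<union> {S} then -1 else if K \<in> FF then 0 else 1)"
  using x K facet_slack_neg_if_Hminus[OF K] facet_slack_pos_if_Hplus[OF K]
    facet_slack_affine_hull[OF K]
  by (auto simp: VS_def split: if_splits)

lemma VS_disjoint_P:
  assumes "S facet_of P" and "x \<in> VS P S FF NN"
  shows "x \<notin> P"
proof -
  have "sgn (facet_slack P S x) = -1"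
    using sgn_facet_slack_VS[OF assms(2,1)] by simp
  then have "facet_slack P S x < 0"
    by (simp add: sgn_if split: if_splits)
  then show ?thesis
    using facet_slack_nonneg[OF assms(1)] by force
qed

end

theorem proposition2p3:
  fixes P S :: "'a::euclidean_space set" and FF NN :: "'a set set" and v w :: 'a
  assumes "full_polytope P"
    and "simplex_facet P S"
    and "FF \<subseteq> adj P S" and "NN \<subseteq> adj P S" and "FF \<inter> NN = {}"
    and "VS P S FF NN \<noteq> {}"
    and "v \<in> VS P S FF NN" and "w \<in> VS P S FF NN"
  shows "comb_equiv (convex hull (insert v P)) (convex hull (insert w P))"
proof -
  interpret full_dim_polytope P
    by unfold_locales (rule assms(1))
  have S: "S facet_of P"
    using assms(2) by (simp add: simplex_facet_def)
  have "same_facet_signs P v w"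
    using sgn_facet_slack_VS assms(7,8) by (simp add: same_facet_signs_def)
  moreover have "v \<notin> P" and "w \<notin> P"
    using VS_disjoint_P[OF S] assms(7,8) by auto
  ultimately show ?thesis
    using comb_equiv_hull_insert_if_same_facet_signs by blast
qed

end
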